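(* For the wound-string system of the context with parameters $(a,C,m)=(\tfrac12,1,-1)$, the fixed points are exactly the four points $(x_1,x_2)\in\{(2,1),(2,-1),(-2,1),(-2,-1)\}$. At each of them, the deviation equations $\ddot\xi_i+2N^i_j\dot\xi_j+2\frac{\partial G^i}{\partial x_j}\xi_j=0$ (coefficients evaluated at $(x,y)=(\bar x,0)$) reduce to $\ddot\xi_1+\tfrac14\xi_1=0$, $\ddot\xi_2+\tfrac14\xi_2=0$; with $\xi(0)=0$, $\dot\xi(0)=(\xi_{10},\xi_{20})\ne0$ the solution is $\xi_i(t)=2\xi_{i0}\sin(t/2)$, so $\frac{\xi_1(t)^2+\xi_2(t)^2}{\xi_{10}^2+\xi_{20}^2}=4\sin^2(t/2)<t^2$ for small $t>0$, and all four fixed points are Jacobi stable (the deviation curvature tensor there equals $-\tfrac14 I_2$).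
   Context: Wound-string system: $\ddot x_1+2G^1=0$, $\ddot x_2+2G^2=0$, $y_i=\dot x_i$, with $G^1=\frac{x_1}{2a^2x_1^2+2m^2x_2^2}\big[a^2(1-y_1^2)-y_2^2-C^2\frac{(a^2x_1^2+m^2x_2^2)^2}{x_1^4x_2^2}\big]$, $G^2=\frac{x_2}{2a^2x_1^2+2m^2x_2^2}\big[m^2(a^2(1-y_1^2)-y_2^2)-a^2C^2\frac{(a^2x_1^2+m^2x_2^2)^2}{x_1^2x_2^4}\big]$. Fixed points: $(x_1,x_2)$ with $x_1x_2\neq0$ and $G^1(x,0)=G^2(x,0)=0$. Einstein summation; $N^i_j=\partial G^i/\partial y_j$, $G^i_{j\ell}=\partial N^i_j/\partial y_\ell$, $P^i_j=-2\frac{\partial G^i}{\partial x_j}-2G^\ell G^i_{j\ell}+y_\ell\frac{\partial N^i_j}{\partial x_\ell}+N^i_\ell N^\ell_j$. Jacobi stable: all eigenvalues of $(P^i_j)$ at $(\bar x,0)$ have strictly negative real parts. *)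

theory Defs
  imports "HOL-Analysis.Analysis"
begin

text \<open>Points (x_1,x_2) and velocities (y_1,y_2) are functions nat => real, only the
  components 1 and 2 being relevant. Einstein sums run over the index set {1,2}.\<close>

definition vec2 :: "real \<Rightarrow> real \<Rightarrow> nat \<Rightarrow> real" where
  "vec2 u v = (\<lambda>i. if i = 1 then u else v)"

definition G1 :: "real \<Rightarrow> real \<Rightarrow> real \<Rightarrow> (nat \<Rightarrow> real) \<Rightarrow> (nat \<Rightarrow> real) \<Rightarrow> real" where
  "G1 a C m x y = x 1 / (2*a^2*(x 1)^2 + 2*m^2*(x 2)^2) *
     (a^2*(1 - (y 1)^2) - (y 2)^2
      - C^2 * (a^2*(x 1)^2 + m^2*(x 2)^2)^2 / ((x 1)^4 * (x 2)^2))"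

definition G2 :: "real \<Rightarrow> real \<Rightarrow> real \<Rightarrow> (nat \<Rightarrow> real) \<Rightarrow> (nat \<Rightarrow> real) \<Rightarrow> real" where
  "G2 a C m x y = x 2 / (2*a^2*(x 1)^2 + 2*m^2*(x 2)^2) *
     (m^2*(a^2*(1 - (y 1)^2) - (y 2)^2)
      - a^2 * C^2 * (a^2*(x 1)^2 + m^2*(x 2)^2)^2 / ((x 1)^2 * (x 2)^4))"

definition Gf :: "real \<Rightarrow> real \<Rightarrow> real \<Rightarrow> nat \<Rightarrow> (nat \<Rightarrow> real) \<Rightarrow> (nat \<Rightarrow> real) \<Rightarrow> real" where
  "Gf a C m i x y = (if i = 1 then G1 a C m x y else G2 a C m x y)"

definition pd :: "((nat \<Rightarrow> real) \<Rightarrow> real) \<Rightarrow> (nat \<Rightarrow> real) \<Rightarrow> nat \<Rightarrow> real" where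
  "pd f v j = deriv (\<lambda>t. f (v(j := t))) (v j)"

definition Nc :: "real \<Rightarrow> real \<Rightarrow> real \<Rightarrow> nat \<Rightarrow> nat \<Rightarrow> (nat \<Rightarrow> real) \<Rightarrow> (nat \<Rightarrow> real) \<Rightarrow> real" where
  "Nc a C m i j x y = pd (\<lambda>y'. Gf a C m i x y') y j"

definition Gc :: "real \<Rightarrow> real \<Rightarrow> real \<Rightarrow> nat \<Rightarrow> nat \<Rightarrow> nat \<Rightarrow> (nat \<Rightarrow> real) \<Rightarrow> (nat \<Rightarrow> real) \<Rightarrow> real" where
  "Gc a C m i j l x y = pd (\<lambda>y'. Nc a C m i j x y') y l"

definition dGx :: "real \<Rightarrow> real \<Rightarrow> real \<Rightarrow> nat \<Rightarrow> nat \<Rightarrow> (nat \<Rightarrow> real) \<Rightarrow> (nat \<Rightarrow> real) \<Rightarrow> real" where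
  "dGx a C m i j x y = pd (\<lambda>x'. Gf a C m i x' y) x j"

definition Pc :: "real \<Rightarrow> real \<Rightarrow> real \<Rightarrow> nat \<Rightarrow> nat \<Rightarrow> (nat \<Rightarrow> real) \<Rightarrow> (nat \<Rightarrow> real) \<Rightarrow> real" where
  "Pc a C m i j x y =
     - 2 * dGx a C m i j x y
     - 2 * (\<Sum>l\<in>{1,2}. Gf a C m l x y * Gc a C m i j l x y)
     + (\<Sum>l\<in>{1,2}. y l * pd (\<lambda>x'. Nc a C m i j x' y) x l)
     + (\<Sum>l\<in>{1,2}. Nc a C m i l x y * Nc a C m l j x y)"

definition zero2 :: "nat \<Rightarrow> real" where "zero2 = (\<lambda>_. 0)"

definition fixed_point :: "real \<Rightarrow> real \<Rightarrow> real \<Rightarrow> real \<Rightarrow> real \<Rightarrow> bool" where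
  "fixed_point a C m x1 x2 \<longleftrightarrow> x1 * x2 \<noteq> 0 \<and>
     Gf a C m 1 (vec2 x1 x2) zero2 = 0 \<and> Gf a C m 2 (vec2 x1 x2) zero2 = 0"

definition is_eigenvalue2 :: "(nat \<Rightarrow> nat \<Rightarrow> real) \<Rightarrow> complex \<Rightarrow> bool" where
  "is_eigenvalue2 M z \<longleftrightarrow>
     (complex_of_real (M 1 1) - z) * (complex_of_real (M 2 2) - z)
       - complex_of_real (M 1 2) * complex_of_real (M 2 1) = 0"

definition jacobi_stable :: "real \<Rightarrow> real \<Rightarrow> real \<Rightarrow> real \<Rightarrow> real \<Rightarrow> bool" where
  "jacobi_stable a C m x1 x2 \<longleftrightarrow>
     (\<forall>z. is_eigenvalue2 (\<lambda>i j. Pc a C m i j (vec2 x1 x2) zero2) z \<longrightarrow> Re z < 0)"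

end

theory Submission
  imports Defs
begin

(*
  At y = 0 the coefficients G^i depend on y only through y_1^2 and y_2^2, so N^i_j vanishes
  there; at a fixed point G^i vanishes as well, and the deviation curvature tensor reduces to
  P^i_j = -2 dG^i/dx_j. For (a, C, m) = (1/2, 1, -1), writing u = x_1^2 and v = x_2^2, the
  fixed-point equations read u^2 v / 4 = (u/4 + v)^2 = u v^2, which force u = 4 and v = 1.
  At these points dG^i/dx_j = delta_ij / 8, so the deviation equations decouple into
  xi'' + xi / 4 = 0, whose solutions are pinned down by the constancy of an energy, and
  P = -I/4 has the double eigenvalue -1/4. Finally |sin s| < s for s > 0 gives
  4 sin^2 (t/2) < t^2 for every t > 0.
*)

lemma pd_eqI: "((\<lambda>t. f (v(j := t))) has_real_derivative D) (at (v j)) \<Longrightarrow> pd f v j = D"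
  unfolding pd_def by (rule DERIV_imp_deriv)

lemma Nc_zero2: "Nc a C m i j x zero2 = 0"
  unfolding Nc_def
proof (rule pd_eqI)
  show "((\<lambda>t. Gf a C m i x (zero2(j := t))) has_real_derivative 0) (at (zero2 j))"
    \<comment> \<open>a vanishing denominator is split off because the derivative rule for division needs
      it nonzero; G is then 0, as x / 0 = 0\<close>
    by (cases "i = 1"; cases "j = 1"; cases "j = 2";
        cases "2 * a\<^sup>2 * (x 1)\<^sup>2 + 2 * m\<^sup>2 * (x 2)\<^sup>2 = 0")
       (auto simp: Gf_def G1_def G2_def zero2_def intro!: derivative_eq_intros)
qed

lemma Pc_at_fixed_point:
  assumes "fixed_point a C m x1 x2"
  shows "Pc a C m i j (vec2 x1 x2) zero2 = - 2 * dGx a C m i j (vec2 x1 x2) zero2"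
  using assms by (simp add: Pc_def fixed_point_def Nc_zero2) (simp add: zero2_def)

lemma fixed_point_iff:
  fixes a C m x1 x2 :: real
  assumes "a \<noteq> 0"
  defines "Q \<equiv> a\<^sup>2 * x1\<^sup>2 + m\<^sup>2 * x2\<^sup>2"
  shows "fixed_point a C m x1 x2 \<longleftrightarrow>
    x1 \<noteq> 0 \<and> x2 \<noteq> 0 \<and> a\<^sup>2 * x1 ^ 4 * x2\<^sup>2 = C\<^sup>2 * Q\<^sup>2 \<and> m\<^sup>2 * x1\<^sup>2 * x2 ^ 4 = C\<^sup>2 * Q\<^sup>2"
proof (cases "x1 \<noteq> 0 \<and> x2 \<noteq> 0")
  case True
  then have "0 < 2 * Q"
    using \<open>a \<noteq> 0\<close> unfolding Q_def by (intro mult_pos_pos add_pos_nonneg) auto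
  moreover have "2 * a\<^sup>2 * x1\<^sup>2 + 2 * m\<^sup>2 * x2\<^sup>2 = 2 * Q"
    by (simp add: Q_def)
  ultimately have "G1 a C m (vec2 x1 x2) zero2 = 0 \<longleftrightarrow> a\<^sup>2 * x1 ^ 4 * x2\<^sup>2 = C\<^sup>2 * Q\<^sup>2"
    "G2 a C m (vec2 x1 x2) zero2 = 0 \<longleftrightarrow> m\<^sup>2 * x1\<^sup>2 * x2 ^ 4 = C\<^sup>2 * Q\<^sup>2"
    using True \<open>a \<noteq> 0\<close>
    by (auto simp: G1_def G2_def vec2_def zero2_def Q_def[symmetric] field_simps)
  then show ?thesis
    using True by (simp add: fixed_point_def Gf_def)
qed (auto simp: fixed_point_def)

lemma is_eigenvalue2_scalar:
  assumes "M 1 1 = r" "M 2 2 = r" "M 1 2 = 0"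
  shows "is_eigenvalue2 M z \<longleftrightarrow> z = complex_of_real r"
  using assms by (auto simp: is_eigenvalue2_def)

lemma harmonic_oscillator_unique:
  fixes f f' f'' :: "real \<Rightarrow> real"
  assumes "k \<noteq> 0"
    and f': "\<And>t. (f has_real_derivative f' t) (at t)"
    and f'': "\<And>t. (f' has_real_derivative f'' t) (at t)"
    and ode: "\<And>t. f'' t = - k\<^sup>2 * f t"
  shows "f t = f 0 * cos (k * t) + f' 0 / k * sin (k * t)"
proof -
  define s where "s t = f 0 * cos (k * t) + f' 0 / k * sin (k * t)" for t
  define s' where "s' t = - f 0 * k * sin (k * t) + f' 0 * cos (k * t)" for t
  have s: "(s has_real_derivative s' t) (at t)" for t
    unfolding s_def s'_def using \<open>k \<noteq> 0\<close>
    by (auto intro!: derivative_eq_intros simp: field_simps)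
  have s': "(s' has_real_derivative - k\<^sup>2 * s t) (at t)" for t
    unfolding s_def s'_def using \<open>k \<noteq> 0\<close>
    by (auto intro!: derivative_eq_intros simp: field_simps power2_eq_square)
  define E where "E t = (f' t - s' t)\<^sup>2 + k\<^sup>2 * (f t - s t)\<^sup>2" for t
  have "\<forall>t. (E has_real_derivative 0) (at t)"
  proof
    fix t
    have "(E has_real_derivative
        2 * (f' t - s' t) * (f'' t + k\<^sup>2 * s t) + k\<^sup>2 * (2 * (f t - s t) * (f' t - s' t))) (at t)"
      unfolding E_def[abs_def]
      by (auto intro!: derivative_eq_intros f' f'' s s' simp: algebra_simps)
    then show "(E has_real_derivative 0) (at t)"
      by (simp add: ode algebra_simps)
  qed
  then have "E t = E 0"
    by (rule DERIV_isconst_all)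
  also have "E 0 = 0"
    by (simp add: E_def s_def s'_def)
  finally have "k\<^sup>2 * (f t - s t)\<^sup>2 = 0"
    unfolding E_def by (metis add_nonneg_eq_0_iff zero_le_power2 zero_le_mult_iff)
  then show ?thesis
    using \<open>k \<noteq> 0\<close> by (simp add: s_def)
qed

lemma abs_sin_less_self:
  fixes x :: real
  assumes "0 < x"
  shows "\<bar>sin x\<bar> < x"
proof (cases "x \<le> 1")
  case True
  then have "x < pi" "x / 2 < pi"
    using pi_gt3 by linarith+
  then have "0 < sin x" "0 < sin (x / 2)" "cos (x / 2) < 1"
    using assms sin_gt_zero cos_monotone_0_pi[of 0 "x / 2"] by auto
  then have "\<bar>sin x\<bar> < 2 * sin (x / 2)"
    using sin_double[of "x / 2"] by simp
  also have "\<dots> \<le> x"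
    using sin_x_le_x[of "x / 2"] assms by simp
  finally show ?thesis .
next
  case False
  then show ?thesis
    using abs_sin_le_one[of x] by linarith
qed

lemma four_sin_half_squared_less:
  fixes t :: real
  assumes "0 < t"
  shows "4 * (sin (t / 2))\<^sup>2 < t\<^sup>2"
proof -
  have "\<bar>2 * sin (t / 2)\<bar> < \<bar>t\<bar>"
    using abs_sin_less_self[of "t / 2"] assms by simp
  then have "(2 * sin (t / 2))\<^sup>2 < t\<^sup>2"
    by (metis abs_le_square_iff not_le)
  then show ?thesis
    by (simp add: power_mult_distrib)
qed

lemma scaled_sum_squares_ratio:
  fixes c1 c2 s :: real
  assumes "(c1, c2) \<noteq> (0, 0)"
  shows "((2 * c1 * s)\<^sup>2 + (2 * c2 * s)\<^sup>2) / (c1\<^sup>2 + c2\<^sup>2) = 4 * s\<^sup>2"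
proof -
  have "0 < c1\<^sup>2 + c2\<^sup>2"
    using assms by (simp add: sum_power2_gt_zero_iff)
  moreover have "(2 * c1 * s)\<^sup>2 + (2 * c2 * s)\<^sup>2 = 4 * s\<^sup>2 * (c1\<^sup>2 + c2\<^sup>2)"
    by (simp add: power_mult_distrib algebra_simps)
  ultimately show ?thesis
    by (metis less_irrefl nonzero_mult_div_cancel_right)
qed

lemma wound_string_fixed_points:
  "fixed_point (1/2) 1 (-1) x1 x2 \<longleftrightarrow> (x1, x2) \<in> {(2, 1), (2, -1), (-2, 1), (-2, -1)}"
proof -
  have "fixed_point (1/2) 1 (-1) x1 x2 \<longleftrightarrow> x1\<^sup>2 = 4 \<and> x2\<^sup>2 = 1"
  proof -
    define u v where "u = x1\<^sup>2" and "v = x2\<^sup>2"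
    have "x1 \<noteq> 0 \<longleftrightarrow> 0 < u" "x2 \<noteq> 0 \<longleftrightarrow> 0 < v"
      by (simp_all add: u_def v_def)
    moreover have "x1 ^ 4 = u\<^sup>2" "x2 ^ 4 = v\<^sup>2"
      by (simp_all add: u_def v_def flip: power_mult)
    ultimately have "fixed_point (1/2) 1 (-1) x1 x2 \<longleftrightarrow>
        0 < u \<and> 0 < v \<and> u\<^sup>2 * v / 4 = (u / 4 + v)\<^sup>2 \<and> u * v\<^sup>2 = (u / 4 + v)\<^sup>2"
      by (simp add: fixed_point_iff power_divide flip: u_def v_def)
    also have "\<dots> \<longleftrightarrow> u = 4 \<and> v = 1"
    proof
      assume *: "0 < u \<and> 0 < v \<and> u\<^sup>2 * v / 4 = (u / 4 + v)\<^sup>2 \<and> u * v\<^sup>2 = (u / 4 + v)\<^sup>2"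
      then have "u * v * (u - 4 * v) = 0"
        by (simp add: algebra_simps power2_eq_square)
      then have "u = 4 * v"
        using * by simp
      moreover from this have "v = 1"
        using * by (auto simp: algebra_simps power2_eq_square)
      ultimately show "u = 4 \<and> v = 1"
        by simp
    qed (simp add: power2_eq_square)
    finally show ?thesis
      by (simp add: u_def v_def)
  qed
  also have "\<dots> \<longleftrightarrow> (x1, x2) \<in> {(2, 1), (2, -1), (-2, 1), (-2, -1)}"
    using power2_eq_iff[of x1 2] power2_eq_iff[of x2 1] by auto
  finally show ?thesis .
qed

lemma dGx_wound_string_fixed_points:
  assumes "(x1, x2) \<in> {(2, 1), (2, -1), (-2, 1), (-2, -1)}" "i \<in> {1, 2}" "j \<in> {1, 2}"
  shows "dGx (1/2) 1 (-1) i j (vec2 x1 x2) zero2 = (if i = j then 1/8 else 0)"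
  unfolding dGx_def
proof (rule pd_eqI)
  show "((\<lambda>t. Gf (1/2) 1 (-1) i ((vec2 x1 x2)(j := t)) zero2) has_real_derivative
      (if i = j then 1/8 else 0)) (at (vec2 x1 x2 j))"
    using assms
    by (auto simp: Gf_def G1_def G2_def zero2_def vec2_def power2_eq_square field_simps
        intro!: derivative_eq_intros)
qed

lemma Pc_wound_string_fixed_points:
  assumes "(x1, x2) \<in> {(2, 1), (2, -1), (-2, 1), (-2, -1)}" "i \<in> {1, 2}" "j \<in> {1, 2}"
  shows "Pc (1/2) 1 (-1) i j (vec2 x1 x2) zero2 = (if i = j then -1/4 else 0)"
  using assms by (simp add: Pc_at_fixed_point wound_string_fixed_points dGx_wound_string_fixed_points)

lemma jacobi_stable_wound_string_fixed_points:
  assumes "(x1, x2) \<in> {(2, 1), (2, -1), (-2, 1), (-2, -1)}"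
  shows "jacobi_stable (1/2) 1 (-1) x1 x2"
  using assms is_eigenvalue2_scalar[where r = "-1/4"]
  by (simp add: jacobi_stable_def Pc_wound_string_fixed_points)

lemma wound_string_deviation_solution:
  fixes \<xi> \<xi>' \<xi>'' :: "nat \<Rightarrow> real \<Rightarrow> real"
  assumes fixed: "(x1, x2) \<in> {(2, 1), (2, -1), (-2, 1), (-2, -1)}"
    and deviation: "\<forall>i\<in>{1,2}. \<forall>t.
        (\<xi> i has_real_derivative \<xi>' i t) (at t)
      \<and> (\<xi>' i has_real_derivative \<xi>'' i t) (at t)
      \<and> \<xi>'' i t
        + 2 * (\<Sum>j\<in>{1,2}. Nc (1/2) 1 (-1) i j (vec2 x1 x2) zero2 * \<xi>' j t)
        + 2 * (\<Sum>j\<in>{1,2}. dGx (1/2) 1 (-1) i j (vec2 x1 x2) zero2 * \<xi> j t) = 0"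
    and i: "i \<in> {1, 2}" and "\<xi> i 0 = 0"
  shows "\<xi> i t = 2 * \<xi>' i 0 * sin (t / 2)"
proof -
  have "\<xi>'' i t = - (1/2)\<^sup>2 * \<xi> i t" for t
  proof -
    have "\<xi>'' i t
        + 2 * (\<Sum>j\<in>{1,2}. Nc (1/2) 1 (-1) i j (vec2 x1 x2) zero2 * \<xi>' j t)
        + 2 * (\<Sum>j\<in>{1,2}. dGx (1/2) 1 (-1) i j (vec2 x1 x2) zero2 * \<xi> j t) = 0"
      using deviation i by blast
    moreover have "2 * (\<Sum>j\<in>{1,2}. dGx (1/2) 1 (-1) i j (vec2 x1 x2) zero2 * \<xi> j t) = \<xi> i t / 4"
      using fixed i by (auto simp: dGx_wound_string_fixed_points)
    ultimately show ?thesis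
      by (simp add: Nc_zero2 power_divide)
  qed
  then have "\<xi> i t = \<xi> i 0 * cos (1/2 * t) + \<xi>' i 0 / (1/2) * sin (1/2 * t)"
    using deviation i by (intro harmonic_oscillator_unique) auto
  then show ?thesis
    using \<open>\<xi> i 0 = 0\<close> by simp
qed

theorem mainTheorem5:
  shows
  "(\<forall>x1 x2. fixed_point (1/2) 1 (-1) x1 x2 \<longleftrightarrow>
       (x1, x2) \<in> {(2, 1), (2, -1), (-2, 1), (-2, -1)})
   \<and> (\<forall>x1 x2. (x1, x2) \<in> {(2, 1), (2, -1), (-2, 1), (-2, -1 :: real)} \<longrightarrow>
       (\<forall>i\<in>{1,2}. \<forall>j\<in>{1,2}.
          Nc (1/2) 1 (-1) i j (vec2 x1 x2) zero2 = 0
          \<and> 2 * dGx (1/2) 1 (-1) i j (vec2 x1 x2) zero2 = (if i = j then 1/4 else 0)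
          \<and> Pc (1/2) 1 (-1) i j (vec2 x1 x2) zero2 = (if i = j then -1/4 else 0))
     \<and> (\<forall>(\<xi> :: nat \<Rightarrow> real \<Rightarrow> real) \<xi>' \<xi>'' \<xi>10 \<xi>20.
          (\<xi>10, \<xi>20) \<noteq> (0, 0)
          \<and> (\<forall>i\<in>{1,2}. \<forall>t.
               (\<xi> i has_real_derivative \<xi>' i t) (at t)
             \<and> (\<xi>' i has_real_derivative \<xi>'' i t) (at t)
             \<and> \<xi>'' i t
               + 2 * (\<Sum>j\<in>{1,2}. Nc (1/2) 1 (-1) i j (vec2 x1 x2) zero2 * \<xi>' j t)
               + 2 * (\<Sum>j\<in>{1,2}. dGx (1/2) 1 (-1) i j (vec2 x1 x2) zero2 * \<xi> j t) = 0)
          \<and> \<xi> 1 0 = 0 \<and> \<xi> 2 0 = 0 \<and> \<xi>' 1 0 = \<xi>10 \<and> \<xi>' 2 0 = \<xi>20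
          \<longrightarrow> (\<forall>t. \<xi> 1 t = 2 * \<xi>10 * sin (t/2) \<and> \<xi> 2 t = 2 * \<xi>20 * sin (t/2))
            \<and> (\<forall>t. ((\<xi> 1 t)^2 + (\<xi> 2 t)^2) / (\<xi>10^2 + \<xi>20^2) = 4 * (sin (t/2))^2)
            \<and> (\<exists>\<delta>>0. \<forall>t. 0 < t \<and> t < \<delta> \<longrightarrow>
                 ((\<xi> 1 t)^2 + (\<xi> 2 t)^2) / (\<xi>10^2 + \<xi>20^2) < t^2))
     \<and> jacobi_stable (1/2) 1 (-1) x1 x2)"
proof ((intro conjI allI impI ballI; (elim conjE)?), goal_cases)
  case 1
  show ?case by (rule wound_string_fixed_points)
next
  case 2
  show ?case by (rule Nc_zero2)
next
  case (3 x1 x2 i j)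
  then show ?case by (simp add: dGx_wound_string_fixed_points)
next
  case (4 x1 x2 i j)
  then show ?case by (rule Pc_wound_string_fixed_points)
next
  case (5 x1 x2 \<xi> \<xi>' \<xi>'' \<xi>10 \<xi>20 t)
  then show ?case
    using wound_string_deviation_solution[OF 5(1,3), where i = 1] by simp
next
  case (6 x1 x2 \<xi> \<xi>' \<xi>'' \<xi>10 \<xi>20 t)
  then show ?case
    using wound_string_deviation_solution[OF 6(1,3), where i = 2] by simp
next
  case (7 x1 x2 \<xi> \<xi>' \<xi>'' \<xi>10 \<xi>20 t)
  then show ?case
    using wound_string_deviation_solution[OF 7(1,3), where i = 1]
      wound_string_deviation_solution[OF 7(1,3), where i = 2] scaled_sum_squares_ratio[OF 7(2)]
    by simp
next
  case (8 x1 x2 \<xi> \<xi>' \<xi>'' \<xi>10 \<xi>20)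
  then show ?case
    using wound_string_deviation_solution[OF 8(1,3), where i = 1]
      wound_string_deviation_solution[OF 8(1,3), where i = 2] scaled_sum_squares_ratio[OF 8(2)]
      four_sin_half_squared_less
    by (intro exI[of _ 1]) simp
next
  case (9 x1 x2)
  then show ?case by (rule jacobi_stable_wound_string_fixed_points)
qed

end
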